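(* Let $p$ be a prime and let $G$ be an abelian group in which every element has order $p^k$ for some $k\ge0$. Let $H=\{x\in G: px=0\}$. Then the map $\mathbb{P}(H)\to\mathbb{P}(G)$ induced by inclusion, $[x]_H\mapsto[x]_G$, is a bijection.
   Context: An abelian group is regarded as a $\mathbb{Z}$-module. For a $\mathbb{Z}$-module $M$ let $M^\circ=M\setminus\{0\}$; define $x\sim'y$ on $M^\circ$ if there exist $m\in M$ and $r,s\in\mathbb{Z}$ with $x=rm$, $y=sm$; let $\sim_M$ be the equivalence relation generated by $\sim'$; and let $\mathbb{P}(M)=M^\circ/\sim_M$, with $[x]_M$ the class of $x$. *)

theory Defs
  imports "HOL-Algebra.Algebra"
begin

text \<open>An abelian group is a commutative group G in HOL-Algebra (written multiplicatively,
so the Z-module action r m is the integer power m [^] r and 0 is the unit).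
For a subset S of the carrier (intended: a subgroup, viewed as a Z-module in its own right),
S-circ = S - {unit}.\<close>

definition punct :: "('a, 'b) monoid_scheme \<Rightarrow> 'a set \<Rightarrow> 'a set" where
  "punct G S = S - {\<one>\<^bsub>G\<^esub>}"

definition sim_basic :: "('a, 'b) monoid_scheme \<Rightarrow> 'a set \<Rightarrow> 'a \<Rightarrow> 'a \<Rightarrow> bool" where
  "sim_basic G S x y \<longleftrightarrow> x \<in> punct G S \<and> y \<in> punct G S \<and>
     (\<exists>m\<in>S. \<exists>(r::int) (s::int). x = m [^]\<^bsub>G\<^esub> r \<and> y = m [^]\<^bsub>G\<^esub> s)"

definition sim_rel :: "('a, 'b) monoid_scheme \<Rightarrow> 'a set \<Rightarrow> ('a \<times> 'a) set" where
  "sim_rel G S = (Id_on (punct G S) \<union> {(x, y). sim_basic G S x y}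
                   \<union> {(x, y). sim_basic G S x y}\<inverse>)\<^sup>+"

definition proj_space :: "('a, 'b) monoid_scheme \<Rightarrow> 'a set \<Rightarrow> 'a set set" where
  "proj_space G S = punct G S // sim_rel G S"

end

theory Submission
  imports Defs
begin

text \<open>Every nonzero g has order p^(k+1) for some k, so g^(p^k) is a nonzero element of
H lying in the cyclic group generated by g; this defines a retraction of G-circ onto
H-circ. The p-torsion of a cyclic p-group is cyclic, generated by a single element of order p,
so two elements of H that are multiples of a common m are multiples of a common element of H.
Hence the retraction carries ~'_G to ~'_H, and it is inverse to the inclusion on the level of
classes.\<close>

definition torsion :: "('a, 'b) monoid_scheme \<Rightarrow> nat \<Rightarrow> 'a set" where
  "torsion G n = {x \<in> carrier G. x [^]\<^bsub>G\<^esub> n = \<one>\<^bsub>G\<^esub>}"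

lemma sim_rel_equiv: "equiv (punct G S) (sim_rel G S)"
proof -
  let ?B = "Id_on (punct G S) \<union> {(x, y). sim_basic G S x y} \<union> {(x, y). sim_basic G S x y}\<inverse>"
  have "?B \<subseteq> punct G S \<times> punct G S"
    unfolding sim_basic_def by auto
  then have closure_in: "?B\<^sup>+ \<subseteq> punct G S \<times> punct G S"
    by (rule trancl_subset_Sigma)
  then have "refl_on (punct G S) (?B\<^sup>+)"
    unfolding refl_on_def by auto
  moreover have "sym (?B\<^sup>+)"
    by (rule sym_trancl) (auto simp: sym_def)
  ultimately show ?thesis
    using closure_in unfolding sim_rel_def by (intro equivI trans_trancl)
qed

lemma sim_rel_refl: "x \<in> punct G S \<Longrightarrow> (x, x) \<in> sim_rel G S"
  using sim_rel_equiv by (metis equivE refl_onD)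

lemma sim_rel_sym: "(x, y) \<in> sim_rel G S \<Longrightarrow> (y, x) \<in> sim_rel G S"
  using sim_rel_equiv by (metis equivE symD)

lemma sim_rel_trans: "(x, y) \<in> sim_rel G S \<Longrightarrow> (y, z) \<in> sim_rel G S \<Longrightarrow> (x, z) \<in> sim_rel G S"
  using sim_rel_equiv by (metis equivE transD)

lemma sim_basic_imp_sim_rel: "sim_basic G S x y \<Longrightarrow> (x, y) \<in> sim_rel G S"
  unfolding sim_rel_def by auto

lemma sim_rel_mono:
  assumes "S \<subseteq> T"
  shows "sim_rel G S \<subseteq> sim_rel G T"
proof -
  have "sim_basic G S x y \<Longrightarrow> sim_basic G T x y" for x y
    using assms unfolding sim_basic_def punct_def by blast
  moreover have "punct G S \<subseteq> punct G T"
    using assms unfolding punct_def by blast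
  ultimately show ?thesis
    unfolding sim_rel_def by (intro trancl_mono_subset) blast
qed

lemma sim_rel_map:
  assumes maps: "\<And>x. x \<in> punct G T \<Longrightarrow> f x \<in> punct G S"
    and basic: "\<And>x y. sim_basic G T x y \<Longrightarrow> (f x, f y) \<in> sim_rel G S"
    and xy: "(x, y) \<in> sim_rel G T"
  shows "(f x, f y) \<in> sim_rel G S"
proof -
  have basic_step: "(f x, f y) \<in> sim_rel G S"
    if "(x, y) \<in> Id_on (punct G T) \<union> {(x, y). sim_basic G T x y}
                   \<union> {(x, y). sim_basic G T x y}\<inverse>" for x y
    using that
  proof (elim UnE)
    assume "(x, y) \<in> Id_on (punct G T)"
    then show ?thesis
      using maps sim_rel_refl by (metis Id_onE Pair_inject)
  qed (auto intro: basic sim_rel_sym)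
  from xy show ?thesis
    unfolding sim_rel_def[of G T]
  proof (induction rule: trancl_induct)
    case (base y)
    then show ?case by (rule basic_step)
  next
    case (step y z)
    from step.hyps(2) have "(f y, f z) \<in> sim_rel G S"
      by (rule basic_step)
    with step.IH show ?case
      by (rule sim_rel_trans)
  qed
qed

lemma sim_rel_Image_sim_rel_subset:
  assumes "S \<subseteq> T" and "x \<in> punct G S"
  shows "sim_rel G T `` (sim_rel G S `` {x}) = sim_rel G T `` {x}"
proof
  show "sim_rel G T `` (sim_rel G S `` {x}) \<subseteq> sim_rel G T `` {x}"
    using sim_rel_mono[OF assms(1)] sim_rel_trans[of x _ G T] by blast
  show "sim_rel G T `` {x} \<subseteq> sim_rel G T `` (sim_rel G S `` {x})"
    using sim_rel_refl[OF assms(2)] by blast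
qed

lemma bij_betw_proj_space_if_retraction:
  assumes ST: "S \<subseteq> T"
    and maps: "\<And>x. x \<in> punct G T \<Longrightarrow> r x \<in> punct G S"
    and respects: "\<And>x y. sim_basic G T x y \<Longrightarrow> (r x, r y) \<in> sim_rel G S"
    and retract_T: "\<And>x. x \<in> punct G T \<Longrightarrow> (r x, x) \<in> sim_rel G T"
    and retract_S: "\<And>x. x \<in> punct G S \<Longrightarrow> (x, r x) \<in> sim_rel G S"
  shows "bij_betw (\<lambda>C. sim_rel G T `` C) (proj_space G S) (proj_space G T)"
proof -
  let ?RS = "sim_rel G S" and ?RT = "sim_rel G T"
  have equiv_S: "equiv (punct G S) ?RS" and equiv_T: "equiv (punct G T) ?RT"
    by (rule sim_rel_equiv)+
  have punct_ST: "punct G S \<subseteq> punct G T"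
    using ST unfolding punct_def by blast
  have extend_class: "?RT `` (?RS `` {x}) = ?RT `` {x}" if "x \<in> punct G S" for x
    using sim_rel_Image_sim_rel_subset[OF ST that] .
  have "inj_on (\<lambda>C. ?RT `` C) (proj_space G S)"
  proof (rule inj_onI)
    fix C D
    assume "C \<in> proj_space G S" "D \<in> proj_space G S" and eq: "?RT `` C = ?RT `` D"
    then obtain x y where x: "x \<in> punct G S" "C = ?RS `` {x}" and y: "y \<in> punct G S" "D = ?RS `` {y}"
      unfolding proj_space_def quotient_def by blast
    have "?RT `` {x} = ?RT `` {y}"
      using eq x y extend_class by simp
    then have "(x, y) \<in> ?RT"
      using eq_equiv_class_iff[OF equiv_T] x(1) y(1) punct_ST by blast
    with maps respects have "(r x, r y) \<in> ?RS"
      by (rule sim_rel_map)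
    then have "(x, y) \<in> ?RS"
      using retract_S[OF x(1)] retract_S[OF y(1)] by (meson sim_rel_sym sim_rel_trans)
    then show "C = D"
      using x y equiv_S by (simp add: equiv_class_eq)
  qed
  moreover have "(\<lambda>C. ?RT `` C) ` proj_space G S = proj_space G T"
  proof
    show "(\<lambda>C. ?RT `` C) ` proj_space G S \<subseteq> proj_space G T"
      using extend_class punct_ST unfolding proj_space_def quotient_def by blast
    show "proj_space G T \<subseteq> (\<lambda>C. ?RT `` C) ` proj_space G S"
    proof
      fix E
      assume "E \<in> proj_space G T"
      then obtain x where x: "x \<in> punct G T" "E = ?RT `` {x}"
        unfolding proj_space_def quotient_def by blast
      have "?RT `` {r x} = E"
        using retract_T[OF x(1)] equiv_T x(2) by (simp add: equiv_class_eq)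
      then have "E = ?RT `` (?RS `` {r x})"
        using extend_class[OF maps[OF x(1)]] by simp
      then show "E \<in> (\<lambda>C. ?RT `` C) ` proj_space G S"
        using maps[OF x(1)] unfolding proj_space_def quotient_def by blast
    qed
  qed
  ultimately show ?thesis
    unfolding bij_betw_def by blast
qed

context group
begin

lemma sim_basic_self_pow:
  assumes "S \<subseteq> carrier G" "x \<in> punct G S" "x [^] (r::int) \<in> punct G S"
  shows "sim_basic G S x (x [^] r)"
proof -
  have "x \<in> S" "x = x [^] (1::int)"
    using assms(1,2) unfolding punct_def by auto
  then show ?thesis
    using assms(2,3) unfolding sim_basic_def by blast
qed

lemma pow_ord_div_prime_power:
  assumes "1 < p" "m \<in> carrier G" "ord m = p ^ Suc k"
  shows "m [^] (p ^ k) \<noteq> \<one>" and "(m [^] (p ^ k)) [^] p = \<one>"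
proof -
  have "\<not> p ^ Suc k dvd p ^ k"
    using assms(1) by (simp add: dvd_power_iff_le)
  then show "m [^] (p ^ k) \<noteq> \<one>"
    using assms(2,3) pow_eq_id by metis
  have "(m [^] (p ^ k)) [^] p = m [^] ord m"
    using assms(2,3) by (simp add: nat_pow_pow mult.commute)
  then show "(m [^] (p ^ k)) [^] p = \<one>"
    using assms(2) by simp
qed

lemma ord_prime_power_SucE:
  assumes "m \<in> carrier G" "m \<noteq> \<one>" "ord m = p ^ n"
  obtains k where "ord m = p ^ Suc k"
proof -
  have "n \<noteq> 0"
    using assms ord_eq_1 by (metis power_0)
  then show ?thesis
    using assms(3) that by (cases n) auto
qed

lemma pow_torsion_eq_pow_generator:
  assumes "1 < p" "m \<in> carrier G" "ord m = p ^ Suc k" "(m [^] (t::int)) [^] p = \<one>"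
  shows "\<exists>i::int. m [^] t = (m [^] (p ^ k)) [^] i"
proof -
  have "m [^] (t * int p) = \<one>"
    using assms(2,4) by (simp add: int_pow_pow flip: int_pow_int)
  then have "int (p ^ k) * int p dvd t * int p"
    using int_pow_eq_id[OF assms(2)] assms(3) by (simp add: mult.commute)
  then obtain i where "t = int (p ^ k) * i"
    using assms(1) by auto
  then have "m [^] t = (m [^] (p ^ k)) [^] i"
    using assms(2) by (simp add: int_pow_pow flip: int_pow_int)
  then show ?thesis by blast
qed

lemma sim_basic_torsion_if_pows:
  assumes "1 < p" "m \<in> carrier G" "ord m = p ^ n"
    and u: "u \<in> punct G (torsion G p)" "u = m [^] (a::int)"
    and v: "v \<in> punct G (torsion G p)" "v = m [^] (b::int)"
  shows "sim_basic G (torsion G p) u v"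
proof -
  have "m \<noteq> \<one>"
    using u by (auto simp: punct_def)
  then obtain k where k: "ord m = p ^ Suc k"
    using ord_prime_power_SucE assms(2,3) by blast
  have "u [^] p = \<one>" "v [^] p = \<one>"
    using u(1) v(1) by (auto simp: punct_def torsion_def)
  then obtain i j :: int where "u = (m [^] (p ^ k)) [^] i" "v = (m [^] (p ^ k)) [^] j"
    using pow_torsion_eq_pow_generator[OF assms(1,2) k] u(2) v(2) by metis
  moreover have "m [^] (p ^ k) \<in> torsion G p"
    using pow_ord_div_prime_power(2)[OF assms(1,2) k] assms(2) by (simp add: torsion_def)
  ultimately show ?thesis
    using u(1) v(1) unfolding sim_basic_def by blast
qed

lemma exists_pow_in_torsion:
  assumes "1 < p" "g \<in> carrier G" "g \<noteq> \<one>" "ord g = p ^ n"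
  shows "\<exists>r::int. g [^] r \<in> punct G (torsion G p)"
proof -
  obtain k where k: "ord g = p ^ Suc k"
    using ord_prime_power_SucE assms(2-4) by blast
  have "g [^] (p ^ k) \<in> punct G (torsion G p)"
    using pow_ord_div_prime_power[OF assms(1,2) k] assms(2) by (simp add: punct_def torsion_def)
  then show ?thesis
    by (metis int_pow_int)
qed

lemma bij_betw_proj_space_torsion:
  assumes p: "1 < p" and ord: "\<forall>x\<in>carrier G. \<exists>k. ord x = p ^ k"
  shows "bij_betw (\<lambda>C. sim_rel G (carrier G) `` C) (proj_space G (torsion G p))
           (proj_space G (carrier G))"
proof -
  let ?H = "torsion G p"
  have H: "?H \<subseteq> carrier G"
    unfolding torsion_def by auto
  have punct_H: "punct G ?H \<subseteq> punct G (carrier G)"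
    using H unfolding punct_def by blast
  have "\<forall>x\<in>punct G (carrier G). \<exists>a::int. x [^] a \<in> punct G ?H"
    using exists_pow_in_torsion[OF p] ord unfolding punct_def by blast
  then have "\<exists>a. \<forall>x\<in>punct G (carrier G). x [^] (a x :: int) \<in> punct G ?H"
    by (rule bchoice)
  then obtain a where a: "\<forall>x\<in>punct G (carrier G). x [^] (a x :: int) \<in> punct G ?H"
    ..
  define r where "r x = x [^] a x" for x
  have maps: "r x \<in> punct G ?H" if "x \<in> punct G (carrier G)" for x
    using a that unfolding r_def by blast
  have respects: "(r x, r y) \<in> sim_rel G ?H" if xy: "sim_basic G (carrier G) x y" for x y
  proof -
    obtain m b c where m: "m \<in> carrier G" and pows: "x = m [^] (b::int)" "y = m [^] (c::int)"
      and "x \<in> punct G (carrier G)" "y \<in> punct G (carrier G)"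
      using xy unfolding sim_basic_def by blast
    then have "r x \<in> punct G ?H" "r y \<in> punct G ?H"
      by (simp_all add: maps)
    moreover have "r x = m [^] (b * a x)" "r y = m [^] (c * a y)"
      using m pows by (simp_all add: r_def int_pow_pow)
    moreover obtain n where "ord m = p ^ n"
      using ord m by blast
    ultimately show ?thesis
      using sim_basic_torsion_if_pows[OF p m] sim_basic_imp_sim_rel by metis
  qed
  have retract_G: "(r x, x) \<in> sim_rel G (carrier G)" if x: "x \<in> punct G (carrier G)" for x
  proof -
    have "r x \<in> punct G (carrier G)"
      using maps[OF x] punct_H by blast
    then have "sim_basic G (carrier G) x (r x)"
      unfolding r_def by (rule sim_basic_self_pow[OF subset_refl x])
    then show ?thesis
      by (rule sim_rel_sym[OF sim_basic_imp_sim_rel])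
  qed
  have retract_H: "(x, r x) \<in> sim_rel G ?H" if x: "x \<in> punct G ?H" for x
  proof -
    have "r x \<in> punct G ?H"
      using maps x punct_H by blast
    then show ?thesis
      unfolding r_def by (intro sim_basic_imp_sim_rel sim_basic_self_pow[OF H x])
  qed
  from maps respects retract_G retract_H show ?thesis
    by (rule bij_betw_proj_space_if_retraction[OF H])
qed

end

theorem theorem4p11:
  fixes G :: "('a, 'b) monoid_scheme" and p :: nat
  assumes "comm_group G"
    and "Factorial_Ring.prime p"
    and "\<forall>x\<in>carrier G. \<exists>k::nat. group.ord G x = p ^ k"
  defines "H \<equiv> {x \<in> carrier G. x [^]\<^bsub>G\<^esub> p = \<one>\<^bsub>G\<^esub>}"
  shows "(\<forall>x\<in>punct G H. sim_rel G (carrier G) `` (sim_rel G H `` {x})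
                          = sim_rel G (carrier G) `` {x})
         \<and> bij_betw (\<lambda>C. sim_rel G (carrier G) `` C) (proj_space G H) (proj_space G (carrier G))"
proof -
  interpret comm_group G by (rule assms(1))
  have p: "1 < p"
    using assms(2) by (rule prime_gt_1_nat)
  have H: "H = torsion G p" "H \<subseteq> carrier G"
    unfolding H_def torsion_def by auto
  show ?thesis
    using sim_rel_Image_sim_rel_subset[OF H(2)] bij_betw_proj_space_torsion[OF p] assms(3) H(1)
    by blast
qed

end
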